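(* Let $(E,\mathscr{T},\le)$ be a locally compact $T_2$-preordered Tychonoff space with $G(\le)=\bigcap_{f\in\mathcal{F}}G_f$. Then every Hausdorff $T_2$-preorder compactification $c:E\to cE$ of $E$ dominates the $\mathcal{H}$-compactification, where $\mathcal{H}\subseteq\mathcal{F}$ is the family of those $f\in\mathcal{F}$ such that $f\circ c^{-1}:c(E)\to[0,1]$ extends to a continuous isotone function $cE\to[0,1]$; moreover this $\mathcal{H}$ satisfies $G(\le)=\bigcap_{h\in\mathcal{H}}G_h$.
   Context: $T_2$-preordered: the graph $G(\le)=\{(x,y):x\le y\}$ is closed in $E\times E$. $\mathcal{F}$ is the family of continuous isotone ($x\le y\Rightarrow f(x)\le f(y)$) functions $f:E\to[0,1]$; $G_f=\{(x,y):f(x)\le f(y)\}$. A preorder compactification is a preorder embedding (continuous isotone injective map, homeomorphism onto image, isotone inverse for the induced preorder) $c:E\to cE$ with dense image into a compact topological preordered space; it is a Hausdorff $T_2$-preorder compactification if $cE$ is Hausdorff and $\le_c$ has closed graph. $c_1\le c_2$ ($c_2$ dominates $c_1$) means there is a continuous isotone $C:c_2E\to c_1E$ with $C\circ c_2=c_1$. $\mathcal{C}$ is the family of continuous functions $E\to[0,1]$ constant outside a compact set. For $\mathcal{H}\subseteq\mathcal{F}$ with $G(\le)=\bigcap_{h\in\mathcal{H}}G_h$, the $\mathcal{H}$-compactification is $c:E\to[0,1]^{\mathcal{H}\cup\mathcal{C}}$, $c(x)=(g(x))_{g\in\mathcal{H}\cup\mathcal{C}}$, with $cE$ the closure of $c(E)$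 with the product (induced) topology and preorder $x\le_c y$ iff $x_h\le y_h$ for all $h\in\mathcal{H}$. *)

theory Defs
  imports "HOL-Analysis.Analysis"
begin

definition preorder_on :: "'a set \<Rightarrow> ('a \<Rightarrow> 'a \<Rightarrow> bool) \<Rightarrow> bool" where
  "preorder_on S le \<longleftrightarrow> (\<forall>x\<in>S. le x x) \<and>
     (\<forall>x\<in>S. \<forall>y\<in>S. \<forall>z\<in>S. le x y \<longrightarrow> le y z \<longrightarrow> le x z)"

definition graph_rel :: "'a topology \<Rightarrow> ('a \<Rightarrow> 'a \<Rightarrow> bool) \<Rightarrow> ('a \<times> 'a) set" where
  "graph_rel X le = {(x, y). x \<in> topspace X \<and> y \<in> topspace X \<and> le x y}"

definition T2_preordered :: "'a topology \<Rightarrow> ('a \<Rightarrow> 'a \<Rightarrow> bool) \<Rightarrow> bool" where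
  "T2_preordered X le \<longleftrightarrow> preorder_on (topspace X) le \<and>
     closedin (prod_topology X X) (graph_rel X le)"

definition isotone_on :: "'a set \<Rightarrow> ('a \<Rightarrow> 'a \<Rightarrow> bool) \<Rightarrow> ('b \<Rightarrow> 'b \<Rightarrow> bool) \<Rightarrow> ('a \<Rightarrow> 'b) \<Rightarrow> bool" where
  "isotone_on S le le' f \<longleftrightarrow> (\<forall>x\<in>S. \<forall>y\<in>S. le x y \<longrightarrow> le' (f x) (f y))"

definition isoF :: "'a topology \<Rightarrow> ('a \<Rightarrow> 'a \<Rightarrow> bool) \<Rightarrow> ('a \<Rightarrow> real) set" where
  "isoF X le = {f. continuous_map X (top_of_set {0..1}) f \<and> isotone_on (topspace X) le (\<le>) f}"

definition graph_fun :: "'a topology \<Rightarrow> ('a \<Rightarrow> real) \<Rightarrow> ('a \<times> 'a) set" where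
  "graph_fun X f = {(x, y). x \<in> topspace X \<and> y \<in> topspace X \<and> f x \<le> f y}"

definition constC :: "'a topology \<Rightarrow> ('a \<Rightarrow> real) set" where
  "constC X = {g. continuous_map X (top_of_set {0..1}) g \<and>
     (\<exists>K a. compactin X K \<and> (\<forall>x\<in>topspace X - K. g x = a))}"

definition preorder_embedding ::
  "'a topology \<Rightarrow> ('a \<Rightarrow> 'a \<Rightarrow> bool) \<Rightarrow> 'b topology \<Rightarrow> ('b \<Rightarrow> 'b \<Rightarrow> bool) \<Rightarrow> ('a \<Rightarrow> 'b) \<Rightarrow> bool" where
  "preorder_embedding X le Y leY c \<longleftrightarrow>
     continuous_map X Y c \<and> inj_on c (topspace X) \<and>
     homeomorphic_map X (subtopology Y (c ` topspace X)) c \<and>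
     (\<forall>x\<in>topspace X. \<forall>y\<in>topspace X. le x y \<longleftrightarrow> leY (c x) (c y))"

definition preorder_compactification ::
  "'a topology \<Rightarrow> ('a \<Rightarrow> 'a \<Rightarrow> bool) \<Rightarrow> 'b topology \<Rightarrow> ('b \<Rightarrow> 'b \<Rightarrow> bool) \<Rightarrow> ('a \<Rightarrow> 'b) \<Rightarrow> bool" where
  "preorder_compactification X le Y leY c \<longleftrightarrow>
     compact_space Y \<and> preorder_on (topspace Y) leY \<and>
     preorder_embedding X le Y leY c \<and>
     Y closure_of (c ` topspace X) = topspace Y"

definition Hausdorff_T2_preorder_compactification ::
  "'a topology \<Rightarrow> ('a \<Rightarrow> 'a \<Rightarrow> bool) \<Rightarrow> 'b topology \<Rightarrow> ('b \<Rightarrow> 'b \<Rightarrow> bool) \<Rightarrow> ('a \<Rightarrow> 'b) \<Rightarrow> bool" where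
  "Hausdorff_T2_preorder_compactification X le Y leY c \<longleftrightarrow>
     preorder_compactification X le Y leY c \<and> Hausdorff_space Y \<and> T2_preordered Y leY"

definition dominates ::
  "'a topology \<Rightarrow> 'b topology \<Rightarrow> ('b \<Rightarrow> 'b \<Rightarrow> bool) \<Rightarrow> ('a \<Rightarrow> 'b)
    \<Rightarrow> 'c topology \<Rightarrow> ('c \<Rightarrow> 'c \<Rightarrow> bool) \<Rightarrow> ('a \<Rightarrow> 'c) \<Rightarrow> bool" where
  "dominates X Y2 le2 c2 Y1 le1 c1 \<longleftrightarrow>
     (\<exists>C. continuous_map Y2 Y1 C \<and> isotone_on (topspace Y2) le2 le1 C \<and>
          (\<forall>x\<in>topspace X. C (c2 x) = c1 x))"

text \<open>The H-compactification: c(x) = (g x)_{g in H \<union> C} in [0,1]^(H \<union> C),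
  cE the closure of c(E) with the induced product topology, and the preorder
  p \<le>_c q iff p_h \<le> q_h for all h in H.\<close>
definition Hcomp_map :: "'a topology \<Rightarrow> ('a \<Rightarrow> real) set \<Rightarrow> 'a \<Rightarrow> (('a \<Rightarrow> real) \<Rightarrow> real)" where
  "Hcomp_map X H = (\<lambda>x. restrict (\<lambda>g. g x) (H \<union> constC X))"

definition Hcomp_cube :: "'a topology \<Rightarrow> ('a \<Rightarrow> real) set \<Rightarrow> (('a \<Rightarrow> real) \<Rightarrow> real) topology" where
  "Hcomp_cube X H = product_topology (\<lambda>_. top_of_set {0..1}) (H \<union> constC X)"

definition Hcomp_space :: "'a topology \<Rightarrow> ('a \<Rightarrow> real) set \<Rightarrow> (('a \<Rightarrow> real) \<Rightarrow> real) topology" where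
  "Hcomp_space X H = subtopology (Hcomp_cube X H)
      ((Hcomp_cube X H) closure_of (Hcomp_map X H ` topspace X))"

definition Hcomp_le :: "('a \<Rightarrow> real) set \<Rightarrow> (('a \<Rightarrow> real) \<Rightarrow> real) \<Rightarrow> (('a \<Rightarrow> real) \<Rightarrow> real) \<Rightarrow> bool" where
  "Hcomp_le H p q \<longleftrightarrow> (\<forall>h\<in>H. p h \<le> q h)"

definition extendable_family ::
  "'a topology \<Rightarrow> ('a \<Rightarrow> 'a \<Rightarrow> bool) \<Rightarrow> 'b topology \<Rightarrow> ('b \<Rightarrow> 'b \<Rightarrow> bool) \<Rightarrow> ('a \<Rightarrow> 'b) \<Rightarrow> ('a \<Rightarrow> real) set" where
  "extendable_family X le Y leY c = {f \<in> isoF X le.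
     \<exists>g. continuous_map Y (top_of_set {0..1}) g \<and> isotone_on (topspace Y) leY (\<le>) g \<and>
         (\<forall>x\<in>topspace X. g (c x) = f x)}"

end

theory Submission
  imports Defs
begin

(* Both halves rest on Nachbin's order-theoretic Urysohn lemma: in a compact space whose
   preorder has closed graph the up- and down-closures of closed sets are closed, so in a compact
   Hausdorff such space the dyadic family of open sets in Urysohn's construction can be chosen to
   consist of lower sets, and the resulting function is isotone. Applied in cE to c x and the up-closure of c x for
   x not below y, it gives a continuous isotone g with g (c y) < g (c x); then g o c is in H,
   so H already recovers the preorder of E. For domination, each h in H extends isotonically by
   definition, and each function constant outside a compact set extends continuously because
   c(E), being locally compact and dense, is open in cE. Together the extensions form a
   continuous isotone map from cE into the cube which agrees with the H-compactification on E,
   hence lands in the closure of its image. *)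

definition up_closure :: "'a topology \<Rightarrow> ('a \<Rightarrow> 'a \<Rightarrow> bool) \<Rightarrow> 'a set \<Rightarrow> 'a set" where
  "up_closure Y le S = {z \<in> topspace Y. \<exists>s\<in>S. le s z}"

definition down_closure :: "'a topology \<Rightarrow> ('a \<Rightarrow> 'a \<Rightarrow> bool) \<Rightarrow> 'a set \<Rightarrow> 'a set" where
  "down_closure Y le S = {z \<in> topspace Y. \<exists>s\<in>S. le z s}"

definition lower_set :: "'a topology \<Rightarrow> ('a \<Rightarrow> 'a \<Rightarrow> bool) \<Rightarrow> 'a set \<Rightarrow> bool" where
  "lower_set Y le V \<longleftrightarrow> V \<subseteq> topspace Y \<and> (\<forall>z\<in>topspace Y. \<forall>w\<in>V. le z w \<longrightarrow> z \<in> V)"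

lemma closedin_up_closure:
  assumes "compact_space Y" "T2_preordered Y le" "closedin Y S"
  shows "closedin Y (up_closure Y le S)"
proof -
  have "closedin (prod_topology Y Y) (graph_rel Y le \<inter> S \<times> topspace Y)"
    using assms by (auto simp: T2_preordered_def closedin_prod_Times_iff)
  moreover have "up_closure Y le S = snd ` (graph_rel Y le \<inter> S \<times> topspace Y)"
    using closedin_subset[OF assms(3)] by (force simp: up_closure_def graph_rel_def)
  ultimately show ?thesis
    using closed_map_snd[OF assms(1), of Y] by (simp add: closed_map_def)
qed

lemma closedin_down_closure:
  assumes "compact_space Y" "T2_preordered Y le" "closedin Y S"
  shows "closedin Y (down_closure Y le S)"
proof -
  have "closedin (prod_topology Y Y) (graph_rel Y le \<inter> topspace Y \<times> S)"
    using assms by (auto simp: T2_preordered_def closedin_prod_Times_iff)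
  moreover have "down_closure Y le S = fst ` (graph_rel Y le \<inter> topspace Y \<times> S)"
    using closedin_subset[OF assms(3)] by (force simp: down_closure_def graph_rel_def)
  ultimately show ?thesis
    using closed_map_fst[OF assms(1), of Y] by (simp add: closed_map_def)
qed

lemma lower_set_complement_up_closure:
  assumes "preorder_on (topspace Y) le" "S \<subseteq> topspace Y"
  shows "lower_set Y le (topspace Y - up_closure Y le S)"
  using assms unfolding lower_set_def up_closure_def preorder_on_def by blast

lemma lower_open_set_between:
  assumes Y: "compact_space Y" "Hausdorff_space Y" "T2_preordered Y le"
    and "closedin Y S" "openin Y U" "lower_set Y le U" "S \<subseteq> U"
  obtains V where "openin Y V" "lower_set Y le V" "S \<subseteq> V" "Y closure_of V \<subseteq> U"
proof -
  have po: "preorder_on (topspace Y) le"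
    using Y(3) by (simp add: T2_preordered_def)
  define K where "K = down_closure Y le S"
  have "closedin Y K" "K \<subseteq> U"
    using closedin_down_closure[OF Y(1,3) assms(4)] assms(6,7)
    by (auto simp: K_def down_closure_def lower_set_def)
  moreover have "normal_space Y"
    using Y compact_Hausdorff_or_regular_imp_normal_space by blast
  ultimately obtain N where N: "openin Y N" "K \<subseteq> N" "Y closure_of N \<subseteq> U"
    using assms(5) unfolding normal_space_alt by meson
  \<comment> \<open>the largest lower set contained in N\<close>
  define V where "V = topspace Y - up_closure Y le (topspace Y - N)"
  show thesis
  proof
    show "openin Y V"
      unfolding V_def using closedin_up_closure[OF Y(1,3)] N(1) by blast
    show "lower_set Y le V"
      unfolding V_def using lower_set_complement_up_closure[OF po] by blast
    have "V \<subseteq> N"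
      using po by (auto simp: V_def up_closure_def preorder_on_def)
    then show "Y closure_of V \<subseteq> U"
      using closure_of_mono N(3) by blast
    have "S \<subseteq> K"
      using po closedin_subset[OF assms(4)] by (auto simp: K_def down_closure_def preorder_on_def)
    moreover have "K \<subseteq> V"
    proof
      fix k assume k: "k \<in> K"
      have "s \<in> N" if "s \<in> topspace Y" "le s k" for s
      proof -
        obtain s0 where "s0 \<in> S" "le k s0" "k \<in> topspace Y"
          using k by (auto simp: K_def down_closure_def)
        then have "s \<in> K"
          using that po closedin_subset[OF assms(4)]
          unfolding K_def down_closure_def preorder_on_def by blast
        then show ?thesis
          using N(2) by blast
      qed
      then show "k \<in> V"
        using k by (auto simp: V_def up_closure_def K_def down_closure_def)
    qed
    ultimately show "S \<subseteq> V"
      by blast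
  qed
qed

definition dyadic_level :: "(real \<Rightarrow> 'a set) \<Rightarrow> 'a \<Rightarrow> real" where
  "dyadic_level G z = Inf (insert 1 {r \<in> dyadics \<inter> {0..1}. z \<in> G r})"

lemma dyadic_level_le:
  assumes "r \<in> dyadics \<inter> {0..1}" "z \<in> G r"
  shows "dyadic_level G z \<le> r"
  using assms unfolding dyadic_level_def by (force intro: cInf_lower)

lemma dyadic_level_le_1: "dyadic_level G z \<le> 1"
  unfolding dyadic_level_def by (force intro: cInf_lower)

lemma dyadic_level_ge:
  assumes "r \<le> 1" "\<And>s. s \<in> dyadics \<inter> {0..1} \<Longrightarrow> z \<in> G s \<Longrightarrow> r \<le> s"
  shows "r \<le> dyadic_level G z"
  using assms unfolding dyadic_level_def by (force intro: cInf_greatest)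

lemma dyadic_level_nonneg: "0 \<le> dyadic_level G z"
  by (rule dyadic_level_ge) auto

lemma dyadic_level_mono:
  assumes "\<And>r. r \<in> dyadics \<inter> {0..1} \<Longrightarrow> w \<in> G r \<Longrightarrow> z \<in> G r"
  shows "dyadic_level G z \<le> dyadic_level G w"
  unfolding dyadic_level_def
  by (rule cInf_superset_mono) (use assms in \<open>auto simp: bdd_below_def intro!: exI[of _ 0]\<close>)

lemma zero_one_in_dyadics: "0 \<in> dyadics \<inter> {0..1::real}" "1 \<in> dyadics \<inter> {0..1::real}"
  by (force simp: dyadics_def)+

lemma dyadics_dense:
  fixes a b :: real
  assumes "0 \<le> a" "a < b" "b \<le> 1"
  obtains r where "r \<in> dyadics \<inter> {0..1}" "a < r" "r < b"
proof -
  obtain n where n: "1 / (b - a) < 2 ^ n"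
    using real_arch_pow[of 2 "1 / (b - a)"] by auto
  define m where "m = nat \<lfloor>a * 2 ^ n\<rfloor> + 1"
  define r where "r = real m / 2 ^ n"
  have "real m = of_int \<lfloor>a * 2 ^ n\<rfloor> + 1"
    using assms(1) by (simp add: m_def)
  then have "a * 2 ^ n < m" "m \<le> a * 2 ^ n + 1"
    using floor_correct[of "a * 2 ^ n"] by linarith+
  moreover have "1 < (b - a) * 2 ^ n"
    using n assms(2) by (simp add: field_simps)
  ultimately have "a < r" "r < b"
    by (simp_all add: r_def field_simps)
  moreover have "r \<in> dyadics"
    by (auto simp: r_def dyadics_def)
  ultimately show thesis
    using that assms by auto
qed

lemma dyadic_level_sublevel_set:
  assumes "\<And>r. r \<in> dyadics \<inter> {0..1} \<Longrightarrow> G r \<subseteq> topspace X"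
  shows "{z \<in> topspace X. dyadic_level G z < a}
      = (if 1 < a then topspace X else (\<Union>r \<in> {r \<in> dyadics \<inter> {0..1}. r < a}. G r))"
proof (cases "1 < a")
  case True
  then show ?thesis
    by (auto intro: le_less_trans[OF dyadic_level_le_1])
next
  case False
  have "\<exists>r \<in> dyadics \<inter> {0..1}. r < a \<and> z \<in> G r" if "dyadic_level G z < a" for z
    using that False unfolding dyadic_level_def
    by (subst (asm) cInf_less_iff) (auto simp: bdd_below_def intro!: exI[of _ 0])
  then show ?thesis
    using False assms dyadic_level_le by (fastforce intro: le_less_trans)
qed

lemma dyadic_level_superlevel_set:
  assumes sub: "\<And>r. r \<in> dyadics \<inter> {0..1} \<Longrightarrow> G r \<subseteq> topspace X"
    and nested: "\<And>r s. \<lbrakk>r \<in> dyadics \<inter> {0..1}; s \<in> dyadics \<inter> {0..1}; r < s\<rbrakk>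
                   \<Longrightarrow> X closure_of G r \<subseteq> G s"
  shows "{z \<in> topspace X. a < dyadic_level G z}
      = (if a < 0 then topspace X
         else (\<Union>r \<in> {r \<in> dyadics \<inter> {0..1}. a < r}. topspace X - X closure_of G r))"
proof (cases "a < 0")
  case True
  then show ?thesis
    by (auto intro: less_le_trans[OF _ dyadic_level_nonneg])
next
  case False
  let ?D = "dyadics \<inter> {0..1::real}"
  have "\<exists>r \<in> ?D. a < r \<and> z \<notin> X closure_of G r" if az: "a < dyadic_level G z" for z
  proof -
    obtain r where r: "r \<in> ?D" "a < r" "r < dyadic_level G z"
      by (rule dyadics_dense[of a "dyadic_level G z"]) (use False az dyadic_level_le_1[of G z] in auto)
    obtain s where s: "s \<in> ?D" "r < s" "s < dyadic_level G z"
      by (rule dyadics_dense[of r "dyadic_level G z"]) (use r dyadic_level_le_1[of G z] in auto)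
    have "z \<notin> G s"
      using s dyadic_level_le by force
    then show ?thesis
      using r s nested by blast
  qed
  moreover have "r \<le> dyadic_level G z" if "r \<in> ?D" "z \<notin> X closure_of G r" "z \<in> topspace X" for r z
  proof (rule dyadic_level_ge)
    show "r \<le> s" if "s \<in> ?D" "z \<in> G s" for s
    proof (rule ccontr)
      assume "\<not> r \<le> s"
      then have "G s \<subseteq> X closure_of G r"
        using nested[of s r] that \<open>r \<in> ?D\<close> sub[of s] closure_of_subset
        by (meson less_le_not_le not_le_imp_less subset_trans closure_of_mono)
      then show False
        using \<open>z \<in> G s\<close> \<open>z \<notin> X closure_of G r\<close> by blast
    qed
  qed (use that in auto)
  ultimately show ?thesis
    using False by (fastforce intro: less_le_trans)
qed

lemma continuous_map_dyadic_level:
  assumes ope: "\<And>r. r \<in> dyadics \<inter> {0..1} \<Longrightarrow> openin X (G r)"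
    and nested: "\<And>r s. \<lbrakk>r \<in> dyadics \<inter> {0..1}; s \<in> dyadics \<inter> {0..1}; r < s\<rbrakk>
                   \<Longrightarrow> X closure_of G r \<subseteq> G s"
  shows "continuous_map X (top_of_set {0..1}) (dyadic_level G)"
  unfolding continuous_map_upper_lower_semicontinuous_lt_gen
proof (intro conjI allI ballI)
  have sub: "G r \<subseteq> topspace X" if "r \<in> dyadics \<inter> {0..1}" for r
    using ope[OF that] by (rule openin_subset)
  show "dyadic_level G z \<in> {0..1}" for z
    using dyadic_level_nonneg dyadic_level_le_1 by auto
  show "openin X {z \<in> topspace X. a < dyadic_level G z}" for a
  proof -
    have "openin X (\<Union>r \<in> {r \<in> dyadics \<inter> {0..1}. a < r}. topspace X - X closure_of G r)"
      by (rule openin_Union) auto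
    then show ?thesis
      using dyadic_level_superlevel_set[OF sub nested, where a = a] by (cases "a < 0") auto
  qed
  show "openin X {z \<in> topspace X. dyadic_level G z < a}" for a
  proof -
    have "openin X (\<Union>r \<in> {r \<in> dyadics \<inter> {0..1}. r < a}. G r)"
      using ope by (intro openin_Union) auto
    then show ?thesis
      using dyadic_level_sublevel_set[OF sub, where a = a] by (cases "1 < a") auto
  qed
qed

lemma lower_open_dyadic_family:
  assumes Y: "compact_space Y" "Hausdorff_space Y" "T2_preordered Y le"
    and "closedin Y S" "openin Y U" "lower_set Y le U" "S \<subseteq> U"
  obtains G :: "real \<Rightarrow> 'a set"
  where "S \<subseteq> G 0" "G 1 = U"
    "\<And>r. r \<in> dyadics \<inter> {0..1} \<Longrightarrow> openin Y (G r) \<and> lower_set Y le (G r)"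
    "\<And>r s. \<lbrakk>r \<in> dyadics \<inter> {0..1}; s \<in> dyadics \<inter> {0..1}; r < s\<rbrakk> \<Longrightarrow> Y closure_of G r \<subseteq> G s"
proof -
  let ?D = "dyadics \<inter> {0..1::real}"
  define R where "R A B \<longleftrightarrow> openin Y A \<and> lower_set Y le A \<and> openin Y B \<and> lower_set Y le B
                              \<and> Y closure_of A \<subseteq> B" for A B
  obtain V where V: "openin Y V" "lower_set Y le V" "S \<subseteq> V" "Y closure_of V \<subseteq> U"
    using lower_open_set_between[OF Y assms(4-7)] by blast
  have "R V U"
    using V assms(5,6) by (simp add: R_def)
  moreover have "\<exists>C. R A C \<and> R C B" if AB: "R A B" for A B
  proof -
    obtain C where "openin Y C" "lower_set Y le C" "Y closure_of A \<subseteq> C" "Y closure_of C \<subseteq> B"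
      by (rule lower_open_set_between[OF Y closedin_closure_of, of B A]) (use AB in \<open>auto simp: R_def\<close>)
    then show ?thesis
      using AB closure_of_subset[OF openin_subset] unfolding R_def by blast
  qed
  moreover have "R A C" if "R A B" "R B C" for A B C
    using that closure_of_subset openin_subset unfolding R_def by (meson subset_trans)
  ultimately have "\<exists>G :: real \<Rightarrow> 'a set. G 0 = V \<and> G 1 = U \<and>
                    (\<forall>r \<in> ?D. \<forall>s \<in> ?D. r < s \<longrightarrow> R (G r) (G s))"
    by (rule recursion_on_dyadic_fractions)
  then obtain G where G0: "G 0 = V" and G1: "G 1 = U"
    and GR: "\<And>r s. \<lbrakk>r \<in> ?D; s \<in> ?D; r < s\<rbrakk> \<Longrightarrow> R (G r) (G s)"
    by blast
  show thesis
  proof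
    show "S \<subseteq> G 0" "G 1 = U"
      using V(3) G0 G1 by simp_all
    show "openin Y (G r) \<and> lower_set Y le (G r)" if "r \<in> ?D" for r
    proof (cases "r = 1")
      case True
      then show ?thesis
        using G1 assms(5,6) by simp
    next
      case False
      then show ?thesis
        using GR[of r 1] that zero_one_in_dyadics by (auto simp: R_def)
    qed
    show "Y closure_of G r \<subseteq> G s" if "r \<in> ?D" "s \<in> ?D" "r < s" for r s
      using GR[OF that] by (simp add: R_def)
  qed
qed

proposition Urysohn_lemma_isotone:
  assumes Y: "compact_space Y" "Hausdorff_space Y" "T2_preordered Y le"
    and S: "closedin Y S" and T: "closedin Y T" "lower_set Y le (topspace Y - T)"
    and "disjnt S T"
  obtains f :: "'a \<Rightarrow> real"
  where "continuous_map Y (top_of_set {0..1}) f" "isotone_on (topspace Y) le (\<le>) f"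
    "f ` S \<subseteq> {0}" "f ` T \<subseteq> {1}"
proof -
  let ?D = "dyadics \<inter> {0..1::real}"
  have "S \<subseteq> topspace Y - T"
    using closedin_subset[OF S] \<open>disjnt S T\<close> by (auto simp: disjnt_def)
  then obtain G :: "real \<Rightarrow> 'a set" where G: "S \<subseteq> G 0" "G 1 = topspace Y - T"
    and G_open_lower: "\<And>r. r \<in> ?D \<Longrightarrow> openin Y (G r) \<and> lower_set Y le (G r)"
    and G_nested: "\<And>r s. \<lbrakk>r \<in> ?D; s \<in> ?D; r < s\<rbrakk> \<Longrightarrow> Y closure_of G r \<subseteq> G s"
    using lower_open_dyadic_family[OF Y S _ T(2)] T(1) by blast
  show thesis
  proof
    show "continuous_map Y (top_of_set {0..1}) (dyadic_level G)"
      using G_open_lower G_nested by (intro continuous_map_dyadic_level) auto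
    show "isotone_on (topspace Y) le (\<le>) (dyadic_level G)"
      unfolding isotone_on_def
    proof (intro ballI impI dyadic_level_mono)
      fix z w r
      assume "z \<in> topspace Y" "w \<in> topspace Y" "le z w" "r \<in> ?D" "w \<in> G r"
      then show "z \<in> G r"
        using G_open_lower[of r] unfolding lower_set_def by blast
    qed
    show "dyadic_level G ` S \<subseteq> {0}"
    proof (rule image_subsetI)
      fix z
      assume "z \<in> S"
      then have "dyadic_level G z \<le> 0"
        using G(1) by (intro dyadic_level_le[OF zero_one_in_dyadics(1)]) blast
      then show "dyadic_level G z \<in> {0}"
        using dyadic_level_nonneg[of G z] by simp
    qed
    have "1 \<le> dyadic_level G z" if "z \<in> T" for z
    proof (rule dyadic_level_ge)
      show "1 \<le> s" if "s \<in> ?D" "z \<in> G s" for s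
      proof (rule ccontr)
        assume "\<not> 1 \<le> s"
        then have "G s \<subseteq> topspace Y - T"
          using G(2) G_nested[of s 1] that zero_one_in_dyadics(2) G_open_lower[of s]
            closure_of_subset[OF openin_subset, of Y "G s"] by auto
        then show False
          using \<open>z \<in> T\<close> \<open>z \<in> G s\<close> by blast
      qed
    qed simp
    then show "dyadic_level G ` T \<subseteq> {1}"
      using dyadic_level_le_1[of G] by (auto intro: order.antisym)
  qed
qed

lemma isotone_separation:
  assumes Y: "compact_space Y" "Hausdorff_space Y" "T2_preordered Y le"
    and "a \<in> topspace Y" "b \<in> topspace Y" "\<not> le a b"
  obtains g :: "'a \<Rightarrow> real"
  where "continuous_map Y (top_of_set {0..1}) g" "isotone_on (topspace Y) le (\<le>) g" "g b < g a"
proof -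
  have po: "preorder_on (topspace Y) le"
    using Y(3) by (simp add: T2_preordered_def)
  let ?T = "up_closure Y le {a}"
  obtain g :: "'a \<Rightarrow> real"
    where g: "continuous_map Y (top_of_set {0..1}) g" "isotone_on (topspace Y) le (\<le>) g"
      "g ` {b} \<subseteq> {0}" "g ` ?T \<subseteq> {1}"
  proof (rule Urysohn_lemma_isotone[OF Y])
    show "closedin Y {b}"
      using closedin_Hausdorff_singleton[OF Y(2) assms(5)] .
    show "closedin Y ?T"
      using closedin_up_closure[OF Y(1,3) closedin_Hausdorff_singleton[OF Y(2) assms(4)]] .
    show "lower_set Y le (topspace Y - ?T)"
      using lower_set_complement_up_closure[OF po] assms(4) by blast
    show "disjnt {b} ?T"
      using assms(6) by (simp add: up_closure_def)
  qed blast
  moreover have "a \<in> ?T"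
    using po assms(4) by (simp add: up_closure_def preorder_on_def)
  ultimately have "g b = 0" "g a = 1"
    by blast+
  then show thesis
    using that[OF g(1,2)] by simp
qed

lemma comp_in_extendable_family:
  assumes "preorder_embedding X le Y leY c"
    and "continuous_map Y (top_of_set {0..1}) g" "isotone_on (topspace Y) leY (\<le>) g"
  shows "g \<circ> c \<in> extendable_family X le Y leY c"
proof -
  have "continuous_map X Y c"
    using assms(1) by (simp add: preorder_embedding_def)
  moreover have "isotone_on (topspace X) le (\<le>) (g \<circ> c)"
    using assms continuous_map_image_subset_topspace[OF \<open>continuous_map X Y c\<close>]
    by (fastforce simp: isotone_on_def preorder_embedding_def)
  ultimately show ?thesis
    using assms(2,3) continuous_map_compose
    by (fastforce simp: extendable_family_def isoF_def)
qed

theorem graph_rel_eq_Inter_extendable_family: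
  assumes "Hausdorff_T2_preorder_compactification X le Y leY c"
  shows "graph_rel X le = (\<Inter>h \<in> extendable_family X le Y leY c. graph_fun X h)"
proof
  show "graph_rel X le \<subseteq> (\<Inter>h \<in> extendable_family X le Y leY c. graph_fun X h)"
    by (auto simp: graph_rel_def graph_fun_def extendable_family_def isoF_def isotone_on_def)
next
  have Y: "compact_space Y" "Hausdorff_space Y" "T2_preordered Y leY"
    and emb: "preorder_embedding X le Y leY c"
    using assms
    by (auto simp: Hausdorff_T2_preorder_compactification_def preorder_compactification_def)
  have "(\<lambda>_. 0) \<in> extendable_family X le Y leY c"
    using comp_in_extendable_family[OF emb, of "\<lambda>_. 0"] by (simp add: o_def isotone_on_def)
  moreover have "le x y"
    if xy: "x \<in> topspace X" "y \<in> topspace X"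
      and H: "\<forall>h \<in> extendable_family X le Y leY c. h x \<le> h y" for x y
  proof (rule ccontr)
    assume "\<not> le x y"
    then have nle: "\<not> leY (c x) (c y)"
      using emb xy by (simp add: preorder_embedding_def)
    have "c x \<in> topspace Y" "c y \<in> topspace Y"
      using emb xy continuous_map_image_subset_topspace by (fastforce simp: preorder_embedding_def)+
    then obtain g :: "'b \<Rightarrow> real" where g: "continuous_map Y (top_of_set {0..1}) g"
      "isotone_on (topspace Y) leY (\<le>) g" "g (c y) < g (c x)"
      using isotone_separation[OF Y _ _ nle] by blast
    then show False
      using comp_in_extendable_family[OF emb g(1,2)] H by force
  qed
  ultimately show "(\<Inter>h \<in> extendable_family X le Y leY c. graph_fun X h) \<subseteq> graph_rel X le"
    by (force simp: graph_rel_def graph_fun_def)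
qed

lemma openin_image_locally_compact_dense_embedding:
  assumes "locally_compact_space X" "Hausdorff_space Y"
    and emb: "homeomorphic_map X (subtopology Y (c ` topspace X)) c"
    and dense: "Y closure_of (c ` topspace X) = topspace Y"
  shows "openin Y (c ` topspace X)"
proof -
  have "c ` topspace X \<subseteq> topspace Y"
    using homeomorphic_imp_surjective_map[OF emb] topspace_subtopology[of Y "c ` topspace X"]
    by blast
  moreover have "locally_compact_space (subtopology Y (c ` topspace X))"
    using homeomorphic_locally_compact_space[OF homeomorphic_map_imp_homeomorphic_space[OF emb]]
      assms(1) by blast
  ultimately show ?thesis
    using locally_compact_subspace_openin_closure_of[OF assms(2)] dense
    by (metis subtopology_topspace)
qed

lemma constC_obtain:
  assumes "g \<in> constC X"
  obtains K a where "compactin X K" "a \<in> {0..1}" "\<And>x. x \<in> topspace X - K \<Longrightarrow> g x = a"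
proof -
  obtain K a where K: "compactin X K" "\<forall>x \<in> topspace X - K. g x = a"
    and g: "continuous_map X (top_of_set {0..1}) g"
    using assms by (auto simp: constC_def)
  \<comment> \<open>if K covers the space, the constant a is unconstrained and may lie outside [0,1]\<close>
  show thesis
  proof (cases "topspace X \<subseteq> K")
    case True
    then show thesis
      using that[of K 0] K by auto
  next
    case False
    then obtain x where "x \<in> topspace X - K"
      by blast
    then show thesis
      using that[of K a] K continuous_map_image_subset_topspace[OF g] by fastforce
  qed
qed

lemma continuous_map_extend_constant:
  assumes "openin Y U" "closedin Y F" "F \<subseteq> U"
    and f: "continuous_map (subtopology Y U) Z f" and "a \<in> topspace Z"
    and const: "\<And>p. p \<in> U - F \<Longrightarrow> f p = a"
  shows "continuous_map Y Z (\<lambda>p. if p \<in> U then f p else a)"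
proof (rule pasting_lemma[where I = "{True, False}" and f = "\<lambda>_ p. if p \<in> U then f p else a"
      and T = "\<lambda>b. if b then U else topspace Y - F"])
  show "openin Y (if b then U else topspace Y - F)" for b
    using assms(1) openin_diff[OF openin_topspace assms(2)] by (cases b) simp_all
  have "continuous_map (subtopology Y U) Z (\<lambda>p. if p \<in> U then f p else a)"
    using f by (rule continuous_map_eq) simp
  moreover have "continuous_map (subtopology Y (topspace Y - F)) Z (\<lambda>p. if p \<in> U then f p else a)"
    using \<open>a \<in> topspace Z\<close> const by (intro continuous_map_eq[OF continuous_map_const[THEN iffD2]]) auto
  ultimately show "continuous_map (subtopology Y (if b then U else topspace Y - F)) Z
      (\<lambda>p. if p \<in> U then f p else a)" for b
    by (cases b) (simp_all only: if_True if_False)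
  show "\<exists>b. b \<in> {True, False} \<and> p \<in> (if b then U else topspace Y - F)
          \<and> (if p \<in> U then f p else a) = (if p \<in> U then f p else a)"
    if "p \<in> topspace Y" for p
  proof (cases "p \<in> U")
    case True
    then show ?thesis
      by (intro exI[of _ True]) simp
  next
    case False
    then show ?thesis
      using that assms(3) by (intro exI[of _ False]) auto
  qed
qed simp

lemma extend_constC_to_dense_embedding:
  assumes "locally_compact_space X" "Hausdorff_space Y"
    and emb: "homeomorphic_map X (subtopology Y (c ` topspace X)) c"
    and dense: "Y closure_of (c ` topspace X) = topspace Y"
    and "g \<in> constC X"
  obtains e :: "'b \<Rightarrow> real"
  where "continuous_map Y (top_of_set {0..1}) e" "\<And>x. x \<in> topspace X \<Longrightarrow> e (c x) = g x"
proof -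
  let ?E = "c ` topspace X"
  obtain K a where K: "compactin X K" "a \<in> {0..1}" "\<And>x. x \<in> topspace X - K \<Longrightarrow> g x = a"
    using constC_obtain[OF assms(5)] by blast
  have g: "continuous_map X (top_of_set {0..1}) g"
    using assms(5) by (simp add: constC_def)
  obtain c' where "homeomorphic_maps X (subtopology Y ?E) c c'"
    using emb homeomorphic_map_maps by blast
  then have c'_cont: "continuous_map (subtopology Y ?E) X c'"
    and c'_inv: "\<And>x. x \<in> topspace X \<Longrightarrow> c' (c x) = x"
    unfolding homeomorphic_maps_def by blast+
  have "continuous_map X Y c"
    using homeomorphic_imp_continuous_map[OF emb] continuous_map_in_subtopology by blast
  then have "closedin Y (c ` K)"
    using compactin_imp_closedin[OF assms(2) image_compactin[OF K(1)]] by blast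
  moreover have "c ` K \<subseteq> ?E"
    using compactin_subset_topspace[OF K(1)] by blast
  moreover have "(g \<circ> c') p = a" if p: "p \<in> ?E - c ` K" for p
  proof -
    obtain x where "x \<in> topspace X - K" "p = c x"
      using p by blast
    then show ?thesis
      using K(3) c'_inv by simp
  qed
  ultimately have "continuous_map Y (top_of_set {0..1}) (\<lambda>p. if p \<in> ?E then (g \<circ> c') p else a)"
    using continuous_map_extend_constant[OF openin_image_locally_compact_dense_embedding[OF assms(1-4)]
        _ _ continuous_map_compose[OF c'_cont g]] K(2)
    by simp
  moreover have "(if c x \<in> ?E then (g \<circ> c') (c x) else a) = g x" if "x \<in> topspace X" for x
    using that c'_inv by simp
  ultimately show thesis
    using that by blast
qed

lemma extensions_to_compactification:
  assumes "locally_compact_space X" "Hausdorff_T2_preorder_compactification X le Y leY c"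
    and "H \<subseteq> extendable_family X le Y leY c"
  obtains E :: "('a \<Rightarrow> real) \<Rightarrow> 'b \<Rightarrow> real"
  where "\<And>k. k \<in> H \<union> constC X \<Longrightarrow> continuous_map Y (top_of_set {0..1}) (E k)"
    "\<And>k x. \<lbrakk>k \<in> H \<union> constC X; x \<in> topspace X\<rbrakk> \<Longrightarrow> E k (c x) = k x"
    "\<And>k. k \<in> H \<Longrightarrow> isotone_on (topspace Y) leY (\<le>) (E k)"
proof -
  have HY: "Hausdorff_space Y" and emb: "preorder_embedding X le Y leY c"
    and dense: "Y closure_of (c ` topspace X) = topspace Y"
    using assms(2)
    by (auto simp: Hausdorff_T2_preorder_compactification_def preorder_compactification_def)
  have hom: "homeomorphic_map X (subtopology Y (c ` topspace X)) c"
    using emb by (simp add: preorder_embedding_def)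
  have "\<forall>k \<in> H \<union> constC X. \<exists>e. continuous_map Y (top_of_set {0..1}) e
          \<and> (\<forall>x \<in> topspace X. e (c x) = k x) \<and> (k \<in> H \<longrightarrow> isotone_on (topspace Y) leY (\<le>) e)"
  proof
    fix k
    assume k: "k \<in> H \<union> constC X"
    show "\<exists>e. continuous_map Y (top_of_set {0..1}) e \<and> (\<forall>x \<in> topspace X. e (c x) = k x)
            \<and> (k \<in> H \<longrightarrow> isotone_on (topspace Y) leY (\<le>) e)"
    proof (cases "k \<in> H")
      case True
      then show ?thesis
        using assms(3) unfolding extendable_family_def by blast
    next
      case False
      then have "k \<in> constC X"
        using k by blast
      then obtain e :: "'b \<Rightarrow> real" where "continuous_map Y (top_of_set {0..1}) e"
        "\<And>x. x \<in> topspace X \<Longrightarrow> e (c x) = k x"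
        using extend_constC_to_dense_embedding[OF assms(1) HY hom dense] by blast
      then show ?thesis
        using False by blast
    qed
  qed
  then obtain E where "\<forall>k \<in> H \<union> constC X. continuous_map Y (top_of_set {0..1}) (E k)
      \<and> (\<forall>x \<in> topspace X. E k (c x) = k x) \<and> (k \<in> H \<longrightarrow> isotone_on (topspace Y) leY (\<le>) (E k))"
    by (rule bchoice[THEN exE])
  then show thesis
    using that[of E] by blast
qed

lemma dominates_Hcomp:
  assumes "locally_compact_space X" "Hausdorff_T2_preorder_compactification X le Y leY c"
    and "H \<subseteq> extendable_family X le Y leY c"
  shows "dominates X Y leY c (Hcomp_space X H) (Hcomp_le H) (Hcomp_map X H)"
proof -
  have dense: "Y closure_of (c ` topspace X) = topspace Y"
    using assms(2)
    by (simp add: Hausdorff_T2_preorder_compactification_def preorder_compactification_def)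
  obtain E :: "('a \<Rightarrow> real) \<Rightarrow> 'b \<Rightarrow> real"
    where E_cont: "\<And>k. k \<in> H \<union> constC X \<Longrightarrow> continuous_map Y (top_of_set {0..1}) (E k)"
      and E_ext: "\<And>k x. \<lbrakk>k \<in> H \<union> constC X; x \<in> topspace X\<rbrakk> \<Longrightarrow> E k (c x) = k x"
      and E_iso: "\<And>k. k \<in> H \<Longrightarrow> isotone_on (topspace Y) leY (\<le>) (E k)"
    using extensions_to_compactification[OF assms] by blast
  define C where "C p = restrict (\<lambda>k. E k p) (H \<union> constC X)" for p
  have C_c: "C (c x) = Hcomp_map X H x" if "x \<in> topspace X" for x
    using E_ext that by (auto simp: C_def Hcomp_map_def)
  have C_cube: "continuous_map Y (Hcomp_cube X H) C"
    unfolding Hcomp_cube_def continuous_map_componentwise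
  proof (intro conjI ballI)
    show "C ` topspace Y \<subseteq> extensional (H \<union> constC X)"
      by (auto simp: C_def)
    fix k
    assume k: "k \<in> H \<union> constC X"
    then have "(\<lambda>p. C p k) = E k"
      by (simp add: C_def fun_eq_iff)
    then show "continuous_map Y (top_of_set {0..1}) (\<lambda>p. C p k)"
      using E_cont k by simp
  qed
  have "C ` topspace Y \<subseteq> Hcomp_cube X H closure_of (C ` c ` topspace X)"
    using continuous_map_image_closure_subset[OF C_cube, of "c ` topspace X"] dense by simp
  also have "C ` c ` topspace X = Hcomp_map X H ` topspace X"
    using C_c by (auto simp: image_iff)
  finally have "C ` topspace Y \<subseteq> Hcomp_cube X H closure_of (Hcomp_map X H ` topspace X)" .
  then have "continuous_map Y (Hcomp_space X H) C"
    using C_cube by (simp add: Hcomp_space_def continuous_map_in_subtopology image_subset_iff_funcset)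
  moreover have "isotone_on (topspace Y) leY (Hcomp_le H) C"
    using E_iso by (auto simp: isotone_on_def Hcomp_le_def C_def)
  ultimately show ?thesis
    using C_c unfolding dominates_def by blast
qed

theorem mainTheorem12:
  fixes X :: "'a topology" and le :: "'a \<Rightarrow> 'a \<Rightarrow> bool"
    and Y :: "'b topology" and leY :: "'b \<Rightarrow> 'b \<Rightarrow> bool" and c :: "'a \<Rightarrow> 'b"
  assumes "locally_compact_space X"
    and "completely_regular_space X" and "Hausdorff_space X"
    and "T2_preordered X le"
    and "graph_rel X le = (\<Inter>f\<in>isoF X le. graph_fun X f)"
    and "Hausdorff_T2_preorder_compactification X le Y leY c"
  shows "graph_rel X le = (\<Inter>h\<in>extendable_family X le Y leY c. graph_fun X h)
    \<and> dominates X Y leY c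
        (Hcomp_space X (extendable_family X le Y leY c))
        (Hcomp_le (extendable_family X le Y leY c))
        (Hcomp_map X (extendable_family X le Y leY c))"
  \<comment> \<open>of the hypotheses on E only local compactness is needed\<close>
  using graph_rel_eq_Inter_extendable_family[OF assms(6)]
    dominates_Hcomp[OF assms(1) assms(6) order_refl]
  by blast

end
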